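(* Let $R\in(0,\pi/2)$ and let $\boldsymbol f=(f_1,f_2)$ be the solution on $(0,\pi)$ of \[\boldsymbol f'=\frac{1}{\sin s}\begin{pmatrix}-3\cos s&3\cos s\\ \cos R-\cos s&\cos s-\cos R\end{pmatrix}\boldsymbol f,\qquad \boldsymbol f(R)\sin^4R=\cos R\,(3,2).\] Then $h(s):=f_2(s)\sin^3s$ is nonnegative on $[R,\pi)$. *)

theory Defs
  imports "HOL-Analysis.Analysis"
begin

end

theory Submission
  imports Defs
begin

text \<open>The difference \<open>g = f\<^sub>2 - f\<^sub>1\<close> solves the scalar linear equation
  \<open>g' = -(cos R + 2 cos s) g / sin s\<close>, so it keeps the sign of \<open>g R = -cos R / sin\<^sup>4 R < 0\<close>
  on all of \<open>(0, \<pi>)\<close>. Then \<open>f\<^sub>2' = (cos s - cos R) g / sin s \<ge> 0\<close> for \<open>s \<ge> R\<close>, so \<open>f\<^sub>2\<close>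
  increases from \<open>f\<^sub>2 R > 0\<close>.\<close>

lemma linear_ode_solution_eq_const_mult_exp:
  fixes g a A :: "real \<Rightarrow> real"
  assumes "convex S"
    and g: "\<And>s. s \<in> S \<Longrightarrow> (g has_real_derivative a s * g s) (at s)"
    and A: "\<And>s. s \<in> S \<Longrightarrow> (A has_real_derivative a s) (at s)"
  shows "\<exists>c. \<forall>s\<in>S. g s = c * exp (A s)"
proof -
  have "\<exists>c. \<forall>s\<in>S. g s * exp (- A s) = c"
  proof (rule has_field_derivative_zero_constant[OF \<open>convex S\<close>])
    fix s assume "s \<in> S"
    have "((\<lambda>s. g s * exp (- A s)) has_real_derivative
            a s * g s * exp (- A s) + exp (- A s) * - a s * g s) (at s)"
      using \<open>s \<in> S\<close> by (intro DERIV_mult DERIV_fun_exp DERIV_minus g A)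
    then show "((\<lambda>s. g s * exp (- A s)) has_real_derivative 0) (at s within S)"
      by (simp add: algebra_simps has_field_derivative_at_within)
  qed
  then show ?thesis
    by (metis exp_minus_inverse mult.assoc mult.commute mult_1)
qed

lemma linear_ode_sgn_const:
  fixes g a A :: "real \<Rightarrow> real"
  assumes "convex S"
    and "\<And>s. s \<in> S \<Longrightarrow> (g has_real_derivative a s * g s) (at s)"
    and "\<And>s. s \<in> S \<Longrightarrow> (A has_real_derivative a s) (at s)"
    and "s \<in> S" "t \<in> S"
  shows "sgn (g s) = sgn (g t)"
  using linear_ode_solution_eq_const_mult_exp[OF assms(1-3)] assms(4,5)
  by (auto simp: sgn_mult)

text \<open>\<open>(1 - cos s) / sin s = tan (s/2)\<close>, so this is the classical antiderivative
  \<open>ln (tan (s/2))\<close> of \<open>1 / sin s\<close>.\<close>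

lemma DERIV_ln_tan_half:
  assumes "s \<in> {0<..<pi}"
  shows "((\<lambda>s. ln (1 - cos s) - ln (sin s)) has_real_derivative 1 / sin s) (at s)"
proof -
  have sin: "sin s > 0"
    using assms by (simp add: sin_gt_zero)
  have cos: "cos s < 1"
    using sin cos_le_one[of s] cos_one_sin_zero[of s] by (auto simp: less_le)
  have "((\<lambda>s. ln (1 - cos s) - ln (sin s)) has_real_derivative
          sin s / (1 - cos s) - cos s / sin s) (at s)"
    using sin cos by (auto intro!: derivative_eq_intros)
  moreover have "sin s / (1 - cos s) - cos s / sin s = 1 / sin s"
    using sin cos by (simp add: field_simps sin_squared_eq power2_eq_square)
  ultimately show ?thesis
    by simp
qed

lemma DERIV_two_ln_sin_plus_ln_tan_half:
  assumes "s \<in> {0<..<pi}"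
  shows "((\<lambda>s. 2 * ln (sin s) + c * (ln (1 - cos s) - ln (sin s)))
           has_real_derivative (c + 2 * cos s) / sin s) (at s)"
proof -
  have "((\<lambda>s. ln (sin s)) has_real_derivative cos s / sin s) (at s)"
    using assms by (auto intro!: derivative_eq_intros sin_gt_zero)
  from DERIV_add[OF DERIV_cmult[OF this, of 2] DERIV_cmult[OF DERIV_ln_tan_half[OF assms], of c]]
  show ?thesis
    by (rule DERIV_cong) (simp add: add_divide_distrib)
qed

lemma DERIV_difference_of_system:
  assumes "(f1 has_real_derivative (-3 * cos s * f1 s + 3 * cos s * f2 s) / sin s) (at s)"
    and "(f2 has_real_derivative ((c - cos s) * f1 s + (cos s - c) * f2 s) / sin s) (at s)"
  shows "((\<lambda>s. f2 s - f1 s) has_real_derivative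
           - ((c + 2 * cos s) / sin s) * (f2 s - f1 s)) (at s)"
  by (rule DERIV_cong[OF DERIV_diff[OF assms(2,1)]])
     (simp add: diff_divide_distrib[symmetric] minus_divide_left algebra_simps)

lemma second_component_nondecreasing:
  assumes ode2: "\<And>s. s \<in> {0<..<pi} \<Longrightarrow>
      (f2 has_real_derivative (((cos R - cos s) * f1 s + (cos s - cos R) * f2 s) / sin s)) (at s)"
    and "0 < R" "R \<le> t" "t < pi"
    and diff_nonpos: "\<And>s. s \<in> {R..t} \<Longrightarrow> f2 s - f1 s \<le> 0"
  shows "f2 R \<le> f2 t"
proof (rule DERIV_nonneg_imp_nondecreasing[of R t f2])
  fix x assume x: "R \<le> x" "x \<le> t"
  then have x_in: "x \<in> {0<..<pi}"
    using assms by auto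
  have "cos x \<le> cos R"
    using x assms by (intro cos_monotone_0_pi_le) auto
  then have "0 \<le> (cos x - cos R) * (f2 x - f1 x)"
    using diff_nonpos x by (intro mult_nonpos_nonpos) auto
  then have "0 \<le> ((cos R - cos x) * f1 x + (cos x - cos R) * f2 x) / sin x"
    using sin_gt_zero[of x] x_in by (intro divide_nonneg_pos) (auto simp: algebra_simps)
  then show "\<exists>y. (f2 has_real_derivative y) (at x) \<and> 0 \<le> y"
    using ode2[OF x_in] by blast
qed (use assms in auto)

theorem lemma3p6:
  fixes R :: real and f1 f2 :: "real \<Rightarrow> real"
  assumes R: "0 < R" "R < pi / 2"
    and ode1: "\<And>s. s \<in> {0<..<pi} \<Longrightarrow>
      (f1 has_real_derivative ((-3 * cos s * f1 s + 3 * cos s * f2 s) / sin s)) (at s)"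
    and ode2: "\<And>s. s \<in> {0<..<pi} \<Longrightarrow>
      (f2 has_real_derivative (((cos R - cos s) * f1 s + (cos s - cos R) * f2 s) / sin s)) (at s)"
    and init1: "f1 R * sin R ^ 4 = cos R * 3"
    and init2: "f2 R * sin R ^ 4 = cos R * 2"
  shows "\<forall>s \<in> {R..<pi}. f2 s * sin s ^ 3 \<ge> 0"
proof -
  have R_in: "R \<in> {0<..<pi}"
    using R pi_gt3 by auto
  have "cos R > 0"
    using R by (simp add: cos_gt_zero)
  have "sin R ^ 4 > 0"
    using R_in sin_gt_zero[of R] by simp
  have "(f2 R - f1 R) * sin R ^ 4 = - cos R"
    using init1 init2 by (simp add: algebra_simps)
  then have "f2 R - f1 R < 0"
    using \<open>cos R > 0\<close> \<open>sin R ^ 4 > 0\<close> by (smt (verit) mult_nonneg_nonneg)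
  have diff_neg: "f2 s < f1 s" if "s \<in> {0<..<pi}" for s
    using linear_ode_sgn_const[OF convex_real_interval(8) DERIV_difference_of_system[OF ode1 ode2]
        DERIV_minus[OF DERIV_two_ln_sin_plus_ln_tan_half] that R_in] \<open>f2 R - f1 R < 0\<close>
    by (simp add: sgn_if split: if_splits)
  have "f2 R > 0"
    using init2 \<open>cos R > 0\<close> \<open>sin R ^ 4 > 0\<close> by (smt (verit) mult_nonpos_nonneg)
  show ?thesis
  proof
    fix s assume s: "s \<in> {R..<pi}"
    have "f2 R \<le> f2 s"
      using s R by (intro second_component_nondecreasing[OF ode2 R(1)]) (auto intro!: less_imp_le diff_neg)
    then have "0 \<le> f2 s"
      using \<open>f2 R > 0\<close> by linarith
    moreover have "0 \<le> sin s"
      using s R by (intro sin_ge_zero) auto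
    ultimately show "0 \<le> f2 s * sin s ^ 3"
      by simp
  qed
qed

end
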